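(* Let $n\ge1$, let $L\subseteq\mathbb Z^n$ be a lattice, and let $(\cdot,\cdot)$ be an inner product on $\mathbb R^n$ for which the canonical basis $\vec e_1,\dots,\vec e_n$ is orthogonal, such that $(L,(\cdot,\cdot))$ is a zonotopal lattice. Let $F$ be the span of $L$, let $\pi:\mathbb R^n\to F$ be the $(\cdot,\cdot)$-orthogonal projection, and let $Y=(\pi(\vec e_1),\dots,\pi(\vec e_n))$. Then the oriented matroids $\mathcal M(L)$ and $\mathcal M(Y)$ coincide, i.e. $$\{(\operatorname{sgn}v_1,\dots,\operatorname{sgn}v_n):\vec v\in L\}=\{(\operatorname{sgn}f(\pi(\vec e_1)),\dots,\operatorname{sgn}f(\pi(\vec e_n))): f:F\to\mathbb R\text{ linear}\}.$$
   Context: A lattice $L\subseteq\mathbb Z^n$ is the $\mathbb Z$-span of finitely many linearly independent vectors of $\mathbb Z^n$. The support of $\vec v$ is $\underline{\vec v}=\{i:v_i\ne0\}$. A vector $\vec u\in L$ is elementary if $\vec u\in\{-1,0,+1\}^n\setminus\{\vec 0\}$ and no nonzero vector of $L$ has support strictly contained in $\underline{\vec u}$. $(L,(\cdot,\cdot))$ is a zonotopal lattice if every $\vec v\in L\setminus\{\vec0\}$ has an elementary $\vec u\in L$ with $\underline{\vec u}\subseteq\underline{\vec v}$. The oriented matroid $\mathcal M(L)$ has covectors the sign vectors of vectors of $L$; the oriented matroid $\mathcal M(Y)$ of a vector configuration $Y=(\vec y_1,\dots,\vec y_n)$ has covectors $(\operatorname{sgn}f(\vec y_1),\dots,\operatorname{sgn}f(\vec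 y_n))$ for linear functionals $f$; two oriented matroids coincide if their covector sets are equal. *)

theory Defs
  imports "HOL-Analysis.Analysis"
begin

text \<open>Vectors of R^n are modelled as real^'n, with 'n a finite index type (n = CARD('n) \<ge> 1).\<close>

definition is_lattice :: "(real^'n) set \<Rightarrow> bool" where
  "is_lattice L \<longleftrightarrow> (\<exists>B. finite B \<and> independent B \<and> (\<forall>b\<in>B. \<forall>i. b$i \<in> \<int>) \<and>
      L = {(\<Sum>b\<in>B. c b *\<^sub>R b) | c. \<forall>b\<in>B. c b \<in> \<int>})"

definition supp :: "real^'n \<Rightarrow> 'n set" where
  "supp v = {i. v$i \<noteq> 0}"

definition elementary :: "(real^'n) set \<Rightarrow> real^'n \<Rightarrow> bool" where
  "elementary L u \<longleftrightarrow> u \<in> L \<and> (\<forall>i. u$i \<in> {-1, 0, 1}) \<and> u \<noteq> 0 \<and>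
      \<not> (\<exists>v\<in>L. v \<noteq> 0 \<and> supp v \<subset> supp u)"

definition zonotopal_lattice :: "(real^'n) set \<Rightarrow> bool" where
  "zonotopal_lattice L \<longleftrightarrow> (\<forall>v\<in>L. v \<noteq> 0 \<longrightarrow> (\<exists>u. elementary L u \<and> supp u \<subseteq> supp v))"

definition is_inner_product :: "(real^'n \<Rightarrow> real^'n \<Rightarrow> real) \<Rightarrow> bool" where
  "is_inner_product ip \<longleftrightarrow> bilinear ip \<and> (\<forall>x y. ip x y = ip y x) \<and> (\<forall>x. x \<noteq> 0 \<longrightarrow> ip x x > 0)"

definition orth_proj :: "(real^'n \<Rightarrow> real^'n \<Rightarrow> real) \<Rightarrow> (real^'n) set \<Rightarrow> real^'n \<Rightarrow> real^'n" where
  "orth_proj ip F x = (THE p. p \<in> F \<and> (\<forall>y\<in>F. ip (x - p) y = 0))"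

text \<open>f is a linear functional on the subspace F (values outside F are irrelevant).\<close>
definition linear_on_subspace :: "(real^'n) set \<Rightarrow> (real^'n \<Rightarrow> real) \<Rightarrow> bool" where
  "linear_on_subspace F f \<longleftrightarrow> (\<forall>x\<in>F. \<forall>y\<in>F. f (x + y) = f x + f y) \<and>
      (\<forall>c. \<forall>x\<in>F. f (c *\<^sub>R x) = c * f x)"

end

theory Submission
  imports Defs
begin

text \<open>Both sides are the set of sign vectors of the real subspace \<open>F = span L\<close>.

For \<open>L\<close>: given \<open>u \<in> F\<close>, the subspace of \<open>F\<close> cut out by the zero coordinates of \<open>u\<close> is spanned
by rational combinations of a lattice basis (Gaussian elimination stays rational), so such
combinations approximate \<open>u\<close> inside that subspace; a close enough one has the sign vector
of \<open>u\<close>, and clearing denominators turns it into a lattice vector.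

For \<open>Y\<close>: writing \<open>d\<^sub>i = (e\<^sub>i, e\<^sub>i) > 0\<close>, every linear functional on \<open>F\<close> is \<open>f = (u, \<cdot>)\<close> for
some \<open>u \<in> F\<close>, and then \<open>f(\<pi> e\<^sub>i) = (u, e\<^sub>i) = d\<^sub>i u\<^sub>i\<close>.\<close>

definition sign_vector :: "real^'n \<Rightarrow> 'n \<Rightarrow> real" where
  "sign_vector v = (\<lambda>i. sgn (v$i))"

lemma sign_vector_scaleR_pos: "c > 0 \<Longrightarrow> sign_vector (c *\<^sub>R v) = sign_vector v"
  by (simp add: sign_vector_def sgn_mult)

definition int_span :: "(real^'n) set \<Rightarrow> (real^'n) set" where
  "int_span B = {(\<Sum>b\<in>B. c b *\<^sub>R b) | c. \<forall>b\<in>B. c b \<in> \<int>}"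

definition rat_span :: "(real^'n) set \<Rightarrow> (real^'n) set" where
  "rat_span B = {(\<Sum>b\<in>B. c b *\<^sub>R b) | c. \<forall>b\<in>B. c b \<in> \<rat>}"

lemma rat_span_base:
  assumes "finite B" "b \<in> B"
  shows "b \<in> rat_span B"
proof -
  have "b = (\<Sum>x\<in>B. (if x = b then 1 else 0) *\<^sub>R x)"
    using assms by (simp add: if_distrib[of "\<lambda>r. r *\<^sub>R _"] cong: if_cong)
  then show ?thesis
    unfolding rat_span_def by (intro CollectI exI[of _ "\<lambda>x. if x = b then 1 else 0"]) auto
qed

lemma rat_span_0: "0 \<in> rat_span B"
  unfolding rat_span_def by (intro CollectI exI[of _ "\<lambda>_. 0"]) auto

lemma rat_span_add:
  assumes "x \<in> rat_span B" "y \<in> rat_span B"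
  shows "x + y \<in> rat_span B"
proof -
  obtain c d where "\<forall>b\<in>B. c b \<in> \<rat>" "x = (\<Sum>b\<in>B. c b *\<^sub>R b)"
    and "\<forall>b\<in>B. d b \<in> \<rat>" "y = (\<Sum>b\<in>B. d b *\<^sub>R b)"
    using assms unfolding rat_span_def by blast
  then show ?thesis
    unfolding rat_span_def
    by (intro CollectI exI[of _ "\<lambda>b. c b + d b"]) (auto simp: scaleR_add_left sum.distrib)
qed

lemma rat_span_scaleR:
  assumes "q \<in> \<rat>" "x \<in> rat_span B"
  shows "q *\<^sub>R x \<in> rat_span B"
proof -
  obtain c where "\<forall>b\<in>B. c b \<in> \<rat>" "x = (\<Sum>b\<in>B. c b *\<^sub>R b)"
    using assms(2) unfolding rat_span_def by blast
  then show ?thesis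
    unfolding rat_span_def using assms(1)
    by (intro CollectI exI[of _ "\<lambda>b. q * c b"]) (auto simp: scaleR_sum_right)
qed

lemma rat_span_diff: "x \<in> rat_span B \<Longrightarrow> y \<in> rat_span B \<Longrightarrow> x - y \<in> rat_span B"
  using rat_span_add[of x B "(-1) *\<^sub>R y"] rat_span_scaleR[of "-1" y B] by simp

lemma rat_span_sum:
  "(\<And>a. a \<in> A \<Longrightarrow> f a \<in> rat_span B) \<Longrightarrow> (\<Sum>a\<in>A. f a) \<in> rat_span B"
  by (induction A rule: infinite_finite_induct) (auto intro: rat_span_0 rat_span_add)

lemma rat_span_subset_span: "rat_span B \<subseteq> span B"
  unfolding rat_span_def by (auto intro: span_sum span_scale span_base)

lemma int_span_subset_rat_span: "int_span B \<subseteq> rat_span B"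
  unfolding int_span_def rat_span_def using Ints_subset_Rats by blast

lemma rat_span_component_Rats:
  assumes "\<forall>b\<in>B. \<forall>i. b$i \<in> \<rat>" "x \<in> rat_span B"
  shows "x$i \<in> \<rat>"
proof -
  obtain c where c: "\<forall>b\<in>B. c b \<in> \<rat>" "x = (\<Sum>b\<in>B. c b *\<^sub>R b)"
    using assms(2) unfolding rat_span_def by blast
  then have "x$i = (\<Sum>b\<in>B. c b * b$i)"
    by (simp add: sum_component)
  also have "\<dots> \<in> \<rat>"
    using c(1) assms(1) by (intro Rats_sum Rats_mult) auto
  finally show ?thesis .
qed

lemma rat_span_coordinate_hyperplane:
  assumes B: "\<forall>b\<in>B. \<forall>i. b$i \<in> \<rat>" and S: "finite S" "S \<subseteq> rat_span B"
  shows "\<exists>S'. finite S' \<and> S' \<subseteq> rat_span B \<and> span S' = span S \<inter> {x. x$i = 0}"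
proof (cases "\<forall>s\<in>S. s$i = 0")
  case True
  have "span S \<subseteq> {x. x$i = 0}"
    by (rule span_minimal) (use True in \<open>auto simp: subspace_def\<close>)
  then show ?thesis
    using S by (intro exI[of _ S]) auto
next
  case False
  then obtain t where t: "t \<in> S" "t$i \<noteq> 0"
    by auto
  define g where "g s = s - (s$i / t$i) *\<^sub>R t" for s
  have "linear g"
    by (rule linearI) (simp_all add: g_def add_divide_distrib scaleR_add_left algebra_simps)
  have g_span: "g ` span S \<subseteq> span S"
    using t unfolding g_def by (auto intro: span_diff span_scale span_base)
  have g_kills_i: "g x $ i = 0" for x
    using t by (simp add: g_def)
  have g_fixes: "x$i = 0 \<Longrightarrow> g x = x" for x
    by (simp add: g_def)
  have "span (g ` S) = g ` span S"
    by (rule span_linear_image[OF \<open>linear g\<close>])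
  also have "\<dots> = span S \<inter> {x. x$i = 0}"
    using g_span g_kills_i g_fixes by (force intro: image_eqI)
  finally have "span (g ` S) = span S \<inter> {x. x$i = 0}" .
  moreover have "g ` S \<subseteq> rat_span B"
  proof
    fix y assume "y \<in> g ` S"
    then obtain s where s: "s \<in> S" "y = g s"
      by blast
    have "s$i / t$i \<in> \<rat>"
      using rat_span_component_Rats[OF B] S(2) s(1) t(1) by (intro Rats_divide) auto
    then show "y \<in> rat_span B"
      unfolding s(2) g_def using S(2) s(1) t(1) by (intro rat_span_diff rat_span_scaleR) auto
  qed
  ultimately show ?thesis
    using S(1) by (intro exI[of _ "g ` S"]) auto
qed

lemma rat_span_coordinate_subspace:
  assumes B: "\<forall>b\<in>B. \<forall>i. b$i \<in> \<rat>" and S: "finite S" "S \<subseteq> rat_span B"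
  shows "\<exists>S'. finite S' \<and> S' \<subseteq> rat_span B \<and> span S' = span S \<inter> {x. \<forall>i\<in>Z. x$i = 0}"
proof -
  have "finite Z"
    by simp
  then show ?thesis
  proof (induction Z rule: finite_induct)
    case empty
    then show ?case using S by auto
  next
    case (insert j Z)
    then obtain S' where S': "finite S'" "S' \<subseteq> rat_span B"
      "span S' = span S \<inter> {x. \<forall>i\<in>Z. x$i = 0}"
      by blast
    obtain S'' where "finite S''" "S'' \<subseteq> rat_span B" "span S'' = span S' \<inter> {x. x$j = 0}"
      using rat_span_coordinate_hyperplane[OF B S'(1,2)] by blast
    then show ?case
      using S'(3) by (intro exI[of _ S'']) auto
  qed
qed

lemma rat_span_dense_in_span:
  assumes "finite S" "S \<subseteq> rat_span B" "u \<in> span S"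
  shows "\<exists>q. (\<forall>k. q k \<in> rat_span B \<inter> span S) \<and> q \<longlonglongrightarrow> u"
proof -
  obtain a where u: "u = (\<Sum>s\<in>S. a s *\<^sub>R s)"
    using assms(3) span_finite[OF assms(1)] by auto
  have "\<forall>s. \<exists>r. (\<forall>k. r k \<in> \<rat>) \<and> r \<longlonglongrightarrow> a s"
    using closure_sequential Rats_closure_real by blast
  then obtain r where r: "\<And>s k. r s k \<in> \<rat>" "\<And>s. r s \<longlonglongrightarrow> a s"
    by metis
  define q where "q k = (\<Sum>s\<in>S. r s k *\<^sub>R s)" for k
  have "q k \<in> rat_span B" for k
    unfolding q_def using assms(2) r(1) by (intro rat_span_sum rat_span_scaleR) auto
  moreover have "q k \<in> span S" for k
    unfolding q_def by (intro span_sum span_scale span_base)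
  moreover have "q \<longlonglongrightarrow> u"
    unfolding q_def u by (intro tendsto_sum tendsto_scaleR tendsto_const r(2))
  ultimately show ?thesis
    by blast
qed

lemma eventually_sign_vector_eq:
  fixes q :: "nat \<Rightarrow> real^'n"
  assumes "q \<longlonglongrightarrow> u" and "\<And>k i. u$i = 0 \<Longrightarrow> q k $ i = 0"
  shows "\<forall>\<^sub>F k in sequentially. sign_vector (q k) = sign_vector u"
proof -
  have "\<forall>\<^sub>F k in sequentially. u$i \<noteq> 0 \<longrightarrow> q k $ i * u$i > 0" for i
  proof (cases "u$i = 0")
    case False
    have "(\<lambda>k. q k $ i * u$i) \<longlonglongrightarrow> u$i * u$i"
      by (intro tendsto_mult_right tendsto_vec_nth assms(1))
    then have "\<forall>\<^sub>F k in sequentially. q k $ i * u$i > 0"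
      by (rule order_tendstoD(1)) (use False in \<open>metis not_real_square_gt_zero\<close>)
    then show ?thesis
      by (rule eventually_mono) simp
  qed simp
  then have "\<forall>\<^sub>F k in sequentially. \<forall>i. u$i \<noteq> 0 \<longrightarrow> q k $ i * u$i > 0"
    by (rule eventually_all_finite)
  then show ?thesis
  proof (rule eventually_mono)
    fix k assume "\<forall>i. u$i \<noteq> 0 \<longrightarrow> q k $ i * u$i > 0"
    then have "sgn (q k $ i) = sgn (u$i)" for i
      using assms(2)[of i k] by (cases "u$i = 0") (auto simp: zero_less_mult_iff)
    then show "sign_vector (q k) = sign_vector u"
      by (simp add: sign_vector_def)
  qed
qed

lemma Rats_common_denominator:
  assumes "finite A" "\<forall>a\<in>A. c a \<in> \<rat>"
  shows "\<exists>m::int. m > 0 \<and> (\<forall>a\<in>A. of_int m * c a \<in> \<int>)"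
  using assms
proof (induction A rule: finite_induct)
  case empty
  show ?case by (intro exI[of _ 1]) simp
next
  case (insert x A)
  then obtain m :: int where m: "m > 0" "\<forall>a\<in>A. of_int m * c a \<in> \<int>"
    by auto
  obtain p d :: int where pd: "d > 0" "c x = of_int p / of_int d"
    using insert.prems by (auto elim: Rats_cases')
  have "of_int (m * d) * c a \<in> \<int>" if "a \<in> insert x A" for a
  proof (cases "a = x")
    case True
    then show ?thesis using pd by simp
  next
    case False
    then have "of_int d * (of_int m * c a) \<in> \<int>"
      using m(2) that Ints_mult[OF Ints_of_int] by auto
    then show ?thesis by (simp add: algebra_simps)
  qed
  then show ?case
    using m(1) pd(1) by (intro exI[of _ "m * d"]) simp
qed

lemma rat_span_multiple_in_int_span:
  assumes "finite B" "x \<in> rat_span B"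
  shows "\<exists>m::int. m > 0 \<and> of_int m *\<^sub>R x \<in> int_span B"
proof -
  obtain c where c: "\<forall>b\<in>B. c b \<in> \<rat>" "x = (\<Sum>b\<in>B. c b *\<^sub>R b)"
    using assms(2) unfolding rat_span_def by blast
  obtain m :: int where m: "m > 0" "\<forall>b\<in>B. of_int m * c b \<in> \<int>"
    using Rats_common_denominator[OF assms(1) c(1)] by blast
  have "of_int m *\<^sub>R x = (\<Sum>b\<in>B. (of_int m * c b) *\<^sub>R b)"
    by (simp add: c(2) scaleR_sum_right)
  then have "of_int m *\<^sub>R x \<in> int_span B"
    unfolding int_span_def using m(2) by (intro CollectI exI[of _ "\<lambda>b. of_int m * c b"]) simp
  then show ?thesis
    using m(1) by blast
qed

lemma sign_vector_span_in_int_span: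
  assumes "finite B" "\<forall>b\<in>B. \<forall>i. b$i \<in> \<rat>" "u \<in> span B"
  shows "sign_vector u \<in> sign_vector ` int_span B"
proof -
  have "B \<subseteq> rat_span B"
    using rat_span_base[OF assms(1)] by blast
  then obtain S where S: "finite S" "S \<subseteq> rat_span B"
    "span S = span B \<inter> {x. \<forall>i\<in>{i. u$i = 0}. x$i = 0}"
    using rat_span_coordinate_subspace[OF assms(2) assms(1), of "{i. u$i = 0}"] by blast
  then have "u \<in> span S"
    using assms(3) by simp
  then obtain q where q: "\<And>k. q k \<in> rat_span B \<inter> span S" "q \<longlonglongrightarrow> u"
    using rat_span_dense_in_span[OF S(1,2)] by blast
  have "u$i = 0 \<Longrightarrow> q k $ i = 0" for k i
    using q(1)[of k] S(3) by auto
  then have "\<forall>\<^sub>F k in sequentially. sign_vector (q k) = sign_vector u"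
    by (rule eventually_sign_vector_eq[OF q(2)])
  then obtain k where k: "sign_vector (q k) = sign_vector u"
    by (auto simp: eventually_sequentially)
  obtain m :: int where m: "m > 0" "of_int m *\<^sub>R q k \<in> int_span B"
    using rat_span_multiple_in_int_span[OF assms(1)] q(1) by blast
  have "sign_vector (of_int m *\<^sub>R q k) = sign_vector u"
    using m(1) k by (simp add: sign_vector_scaleR_pos)
  then show ?thesis
    using m(2) by (metis image_eqI)
qed

lemma lattice_sign_vectors_eq_span:
  assumes "is_lattice L"
  shows "sign_vector ` L = sign_vector ` span L"
proof
  show "sign_vector ` L \<subseteq> sign_vector ` span L"
    using span_superset by blast
  obtain B where B: "finite B" "\<forall>b\<in>B. \<forall>i. b$i \<in> \<int>" "L = int_span B"
    using assms unfolding is_lattice_def int_span_def by blast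
  have "span L \<subseteq> span B"
    unfolding B(3) using int_span_subset_rat_span rat_span_subset_span
    by (metis span_minimal subspace_span order_trans)
  moreover have "\<forall>b\<in>B. \<forall>i. b$i \<in> \<rat>"
    using B(2) Ints_subset_Rats by blast
  ultimately show "sign_vector ` span L \<subseteq> sign_vector ` L"
    using sign_vector_span_in_int_span[OF B(1)] B(3) by blast
qed

lemma linear_on_subspace_0: "subspace F \<Longrightarrow> linear_on_subspace F f \<Longrightarrow> f 0 = 0"
  unfolding linear_on_subspace_def using subspace_0 by (metis scaleR_zero_left mult_zero_left)

lemma linear_on_subspace_sum:
  assumes "subspace F" "linear_on_subspace F f" "\<And>a. a \<in> A \<Longrightarrow> z a \<in> F"
  shows "f (\<Sum>a\<in>A. c a *\<^sub>R z a) = (\<Sum>a\<in>A. c a * f (z a))"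
  using assms(3)
proof (induction A rule: infinite_finite_induct)
  case (infinite A)
  then show ?case
    using linear_on_subspace_0[OF assms(1,2)] by simp
next
  case empty
  then show ?case
    using linear_on_subspace_0[OF assms(1,2)] by simp
next
  case (insert x A)
  have "(\<Sum>a\<in>A. c a *\<^sub>R z a) \<in> F" "c x *\<^sub>R z x \<in> F"
    using insert.prems assms(1) by (auto intro: subspace_sum subspace_scale)
  then show ?case
    using insert assms(2) unfolding linear_on_subspace_def by simp
qed

locale diagonal_inner_product =
  fixes ip :: "real^'n \<Rightarrow> real^'n \<Rightarrow> real"
  assumes is_inner_product: "is_inner_product ip"
    and axes_orthogonal: "i \<noteq> j \<Longrightarrow> ip (axis i 1) (axis j 1) = 0"
begin

definition weight :: "'n \<Rightarrow> real" where
  "weight i = ip (axis i 1) (axis i 1)"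

lemma bilinear: "bilinear ip"
  using is_inner_product unfolding is_inner_product_def by blast

lemma commute: "ip x y = ip y x"
  using is_inner_product unfolding is_inner_product_def by blast

lemma pos: "x \<noteq> 0 \<Longrightarrow> ip x x > 0"
  using is_inner_product unfolding is_inner_product_def by blast

lemma weight_pos: "weight i > 0"
  unfolding weight_def by (rule pos) (simp add: axis_eq_0_iff)

lemma ip_axis: "ip x (axis i 1) = weight i * x$i"
proof -
  have lin: "linear (\<lambda>x. ip x (axis i 1))"
    using bilinear unfolding bilinear_def by blast
  have "ip x (axis i 1) = ip (\<Sum>j\<in>UNIV. x$j *\<^sub>R axis j 1) (axis i 1)"
    using basis_expansion[of x] by (simp add: scalar_mult_eq_scaleR)
  also have "\<dots> = (\<Sum>j\<in>UNIV. x$j * ip (axis j 1) (axis i 1))"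
    by (simp add: linear_sum[OF lin] linear_scale[OF lin])
  also have "\<dots> = (\<Sum>j\<in>UNIV. if j = i then x$j * ip (axis j 1) (axis i 1) else 0)"
    using axes_orthogonal by (intro sum.cong) auto
  also have "\<dots> = weight i * x$i"
    by (simp add: weight_def)
  finally show ?thesis .
qed

lemma ip_eq_weighted_sum: "ip x y = (\<Sum>i\<in>UNIV. weight i * x$i * y$i)"
proof -
  have lin: "linear (\<lambda>y. ip x y)"
    using bilinear unfolding bilinear_def by blast
  have "ip x y = ip x (\<Sum>i\<in>UNIV. y$i *\<^sub>R axis i 1)"
    using basis_expansion[of y] by (simp add: scalar_mult_eq_scaleR)
  also have "\<dots> = (\<Sum>i\<in>UNIV. y$i * ip x (axis i 1))"
    by (simp add: linear_sum[OF lin] linear_scale[OF lin])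
  finally show ?thesis
    by (simp add: ip_axis mult_ac)
qed

lemma orth_proj_ex1:
  assumes F: "subspace F"
  shows "\<exists>!p. p \<in> F \<and> (\<forall>y\<in>F. ip (x - p) y = 0)"
proof (rule ex_ex1I)
  \<comment> \<open>Rescaling coordinates by \<open>sqrt d\<^sub>i\<close> turns \<open>ip\<close> into the standard inner product,
    for which orthogonal decomposition is in the library.\<close>
  define S where "S v = (\<chi> i. sqrt (weight i) * v$i)" for v :: "real^'n"
  have "linear S"
    by (rule linearI) (simp_all add: S_def vec_eq_iff algebra_simps)
  have ip_S: "ip v w = S v \<bullet> S w" for v w
  proof -
    have sqrt_weight: "sqrt (weight i) * v$i * (sqrt (weight i) * w$i) = weight i * v$i * w$i" for i
      using weight_pos[of i] real_sqrt_mult_self[of "weight i"] by (simp add: algebra_simps)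
    show ?thesis
      by (simp add: ip_eq_weighted_sum S_def inner_vec_def sqrt_weight)
  qed
  have SF: "span (S ` F) = S ` F"
    using linear_subspace_image[OF \<open>linear S\<close> F] by (simp add: span_eq_iff)
  obtain y z where yz: "y \<in> span (S ` F)" "\<And>w. w \<in> span (S ` F) \<Longrightarrow> orthogonal z w"
    "S x = y + z"
    by (metis orthogonal_subspace_decomp_exists)
  then obtain p where p: "p \<in> F" "y = S p"
    unfolding SF by blast
  have "S (x - p) = z"
    using yz(3) p(2) linear_diff[OF \<open>linear S\<close>, of x p] by simp
  then have "ip (x - p) q = 0" if "q \<in> F" for q
    using yz(2)[of "S q"] that unfolding ip_S SF orthogonal_def by blast
  then show "\<exists>p. p \<in> F \<and> (\<forall>y\<in>F. ip (x - p) y = 0)"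
    using p(1) by blast
next
  fix p p' assume p: "p \<in> F \<and> (\<forall>y\<in>F. ip (x - p) y = 0)"
    and p': "p' \<in> F \<and> (\<forall>y\<in>F. ip (x - p') y = 0)"
  then have "p - p' \<in> F"
    using F by (simp add: subspace_diff)
  then have "ip (p - p') (p - p') = ip (x - p') (p - p') - ip (x - p) (p - p')"
    using bilinear_lsub[OF bilinear, of "x - p'" "x - p" "p - p'"] by simp
  also have "\<dots> = 0"
    using p p' \<open>p - p' \<in> F\<close> by simp
  finally show "p = p'"
    using pos[of "p - p'"] by force
qed

lemma orth_proj:
  assumes "subspace F"
  shows orth_proj_in: "orth_proj ip F x \<in> F"
    and orth_proj_orthogonal: "y \<in> F \<Longrightarrow> ip (x - orth_proj ip F x) y = 0"
  using theI'[OF orth_proj_ex1[OF assms, of x]] unfolding orth_proj_def by auto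

lemma orth_proj_unique:
  "subspace F \<Longrightarrow> p \<in> F \<Longrightarrow> (\<forall>y\<in>F. ip (x - p) y = 0) \<Longrightarrow> orth_proj ip F x = p"
  unfolding orth_proj_def by (rule the1_equality[OF orth_proj_ex1]) auto

lemma orth_proj_fixes: "subspace F \<Longrightarrow> x \<in> F \<Longrightarrow> orth_proj ip F x = x"
  by (rule orth_proj_unique) (auto simp: bilinear_lzero[OF bilinear])

lemma ip_orth_proj: "subspace F \<Longrightarrow> y \<in> F \<Longrightarrow> ip y (orth_proj ip F x) = ip y x"
  using orth_proj_orthogonal[of F y x] bilinear_lsub[OF bilinear] commute by simp

lemma linear_orth_proj:
  assumes F: "subspace F"
  shows "linear (orth_proj ip F)"
proof (rule linearI)
  let ?P = "orth_proj ip F"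
  show "?P (x + y) = ?P x + ?P y" for x y
  proof (rule orth_proj_unique[OF F])
    show "?P x + ?P y \<in> F"
      using F by (intro subspace_add orth_proj_in)
    have "x + y - (?P x + ?P y) = (x - ?P x) + (y - ?P y)"
      by simp
    then have "ip (x + y - (?P x + ?P y)) z = ip (x - ?P x) z + ip (y - ?P y) z" for z
      by (simp only: bilinear_ladd[OF bilinear])
    then show "\<forall>z\<in>F. ip (x + y - (?P x + ?P y)) z = 0"
      using orth_proj_orthogonal[OF F] by simp
  qed
  show "?P (c *\<^sub>R x) = c *\<^sub>R ?P x" for c x
  proof (rule orth_proj_unique[OF F])
    show "c *\<^sub>R ?P x \<in> F"
      using F by (intro subspace_scale orth_proj_in)
    have "c *\<^sub>R x - c *\<^sub>R ?P x = c *\<^sub>R (x - ?P x)"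
      by (simp add: scaleR_diff_right)
    then show "\<forall>z\<in>F. ip (c *\<^sub>R x - c *\<^sub>R ?P x) z = 0"
      using orth_proj_orthogonal[OF F] by (simp add: bilinear_lmul[OF bilinear])
  qed
qed

lemma linear_on_subspace_representable:
  assumes F: "subspace F" and f: "linear_on_subspace F f"
  shows "\<exists>u\<in>F. \<forall>y\<in>F. f y = ip u y"
proof -
  let ?P = "orth_proj ip F"
  define w where "w = (\<chi> j. f (?P (axis j 1)) / weight j)"
    \<comment> \<open>so that \<open>ip y w = f (?P y)\<close> for every \<open>y\<close>\<close>
  have "f y = ip (?P w) y" if y: "y \<in> F" for y
  proof -
    have "ip (?P w) y = ip y w"
      using ip_orth_proj[OF F y] commute by simp
    also have "\<dots> = (\<Sum>j\<in>UNIV. y$j * f (?P (axis j 1)))"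
      using weight_pos[THEN less_imp_neq, symmetric] by (simp add: ip_eq_weighted_sum w_def)
    also have "\<dots> = f (\<Sum>j\<in>UNIV. y$j *\<^sub>R ?P (axis j 1))"
      by (rule linear_on_subspace_sum[OF F f, symmetric]) (rule orth_proj_in[OF F])
    also have "(\<Sum>j\<in>UNIV. y$j *\<^sub>R ?P (axis j 1)) = ?P (\<Sum>j\<in>UNIV. y$j *\<^sub>R axis j 1)"
      by (simp add: linear_sum[OF linear_orth_proj[OF F]] linear_scale[OF linear_orth_proj[OF F]])
    also have "\<dots> = y"
      using basis_expansion[of y] orth_proj_fixes[OF F y] by (simp add: scalar_mult_eq_scaleR)
    finally show ?thesis ..
  qed
  then show ?thesis
    using orth_proj_in[OF F] by blast
qed

lemma sgn_ip_orth_proj_axis: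
  assumes "subspace F" "u \<in> F"
  shows "sgn (ip u (orth_proj ip F (axis i 1))) = sgn (u$i)"
  using ip_orth_proj[OF assms] weight_pos[of i] by (simp add: ip_axis sgn_mult)

lemma projected_axes_sign_vectors:
  assumes F: "subspace F"
  shows "{(\<lambda>i. sgn (f (orth_proj ip F (axis i 1)))) | f. linear_on_subspace F f} = sign_vector ` F"
proof (intro equalityI subsetI)
  fix s assume "s \<in> {(\<lambda>i. sgn (f (orth_proj ip F (axis i 1)))) | f. linear_on_subspace F f}"
  then obtain f where f: "linear_on_subspace F f" "s = (\<lambda>i. sgn (f (orth_proj ip F (axis i 1))))"
    by blast
  obtain u where u: "u \<in> F" "\<forall>y\<in>F. f y = ip u y"
    using linear_on_subspace_representable[OF F f(1)] by blast
  have "s = sign_vector u"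
    using f(2) u sgn_ip_orth_proj_axis[OF F u(1)] orth_proj_in[OF F]
    by (simp add: sign_vector_def)
  then show "s \<in> sign_vector ` F"
    using u(1) by blast
next
  fix s assume "s \<in> sign_vector ` F"
  then obtain u where u: "u \<in> F" "s = sign_vector u"
    by blast
  have "linear_on_subspace F (ip u)"
    unfolding linear_on_subspace_def by (simp add: bilinear_radd[OF bilinear] bilinear_rmul[OF bilinear])
  moreover have "s = (\<lambda>i. sgn (ip u (orth_proj ip F (axis i 1))))"
    using u sgn_ip_orth_proj_axis[OF F u(1)] by (simp add: sign_vector_def)
  ultimately show "s \<in> {(\<lambda>i. sgn (f (orth_proj ip F (axis i 1)))) | f. linear_on_subspace F f}"
    by blast
qed

end

theorem corollary1:
  fixes L :: "(real^'n) set" and ip :: "real^'n \<Rightarrow> real^'n \<Rightarrow> real"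
  assumes "is_lattice L"
    and "is_inner_product ip"
    and "\<forall>i j. i \<noteq> j \<longrightarrow> ip (axis i 1) (axis j 1) = 0"
    and "zonotopal_lattice L"
  shows "{(\<lambda>i. sgn (v$i)) | v. v \<in> L} =
         {(\<lambda>i. sgn (f (orth_proj ip (span L) (axis i 1)))) | f. linear_on_subspace (span L) f}"
proof -
  interpret diagonal_inner_product ip
    using assms(2,3) by unfold_locales blast+
  have "{(\<lambda>i. sgn (v$i)) | v. v \<in> L} = sign_vector ` L"
    by (auto simp: sign_vector_def)
  also have "\<dots> = sign_vector ` span L"
    by (rule lattice_sign_vectors_eq_span[OF assms(1)])
  also have "\<dots> = {(\<lambda>i. sgn (f (orth_proj ip (span L) (axis i 1)))) | f. linear_on_subspace (span L) f}"
    by (rule projected_axes_sign_vectors[symmetric]) simp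
  finally show ?thesis .
qed

end
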